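(* Let $q \in C^1(\mathbb{R}^n,\mathbb{R})$ be a scalar function, and let $A$, $B$ and $D$ be linear differential operators with constant coefficients on functions $\mathbb{R}^n\to\mathbb{R}$ with $D = A + B$. Suppose there exist natural numbers $\lambda$ and $k$ and a sufficiently smooth function $W:\mathbb{R}^n\to\mathbb{R}$ such that $$A^{\lambda+k} W(\mathbf{x}) = q(\mathbf{x}) \quad\text{(integration condition)},\qquad B^{\lambda+1} W(\mathbf{x}) = 0 \quad\text{(annihilator condition)}.$$ Define $$Q(\mathbf{x}) := \sum_{p=0}^{\lambda} (-1)^p \binom{k+p-1}{p} A^{\lambda-p} B^p W(\mathbf{x}).$$ Then $D^k Q = q$.
   Context: Powers of operators denote repeated application, with $A^0$, $B^0$, $D^0$ the identity. *)

theory Defs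
  imports "HOL-Analysis.Analysis"
begin

definition partial :: "'n::finite \<Rightarrow> (real^'n \<Rightarrow> real) \<Rightarrow> (real^'n \<Rightarrow> real)" where
  "partial i f = (\<lambda>x. frechet_derivative f (at x) (axis i 1))"

text \<open>Iterated partial derivative along a list of coordinate directions
  (the last element of the list is applied first).\<close>
fun partials :: "'n::finite list \<Rightarrow> (real^'n \<Rightarrow> real) \<Rightarrow> (real^'n \<Rightarrow> real)" where
  "partials [] f = f"
| "partials (i # is) f = partial i (partials is f)"

text \<open>A linear differential operator with constant coefficients is given by finitely many
  real coefficients c(is), one for each monomial in the partial derivatives (a word in the
  coordinate directions); it acts as  f \<mapsto> \<Sum> c(is) \<partial>_is f.\<close>
definition const_coeff_op :: "('n::finite list \<Rightarrow> real) \<Rightarrow> bool" where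
  "const_coeff_op c \<longleftrightarrow> finite {is. c is \<noteq> 0}"

definition diffop :: "('n::finite list \<Rightarrow> real) \<Rightarrow> (real^'n \<Rightarrow> real) \<Rightarrow> (real^'n \<Rightarrow> real)" where
  "diffop c f = (\<lambda>x. \<Sum>is\<in>{is. c is \<noteq> 0}. c is * partials is f x)"

definition smooth :: "(real^'n::finite \<Rightarrow> real) \<Rightarrow> bool" where
  "smooth f \<longleftrightarrow> (\<forall>is. partials is f differentiable_on UNIV)"

definition C1 :: "(real^'n::finite \<Rightarrow> real) \<Rightarrow> bool" where
  "C1 f \<longleftrightarrow> f differentiable_on UNIV \<and> (\<forall>i. continuous_on UNIV (partial i f))"

end

theory Submission
  imports Defs
begin

text \<open>Put \<open>T n p = A\<^sup>n B\<^sup>p W\<close> and \<open>Q k m = \<Sum>p\<le>m. c k p * T (m - p) p\<close>, where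
  \<open>c k p = (-1)\<^sup>p (k + p - 1 choose p)\<close> is the coefficient of \<open>t\<^sup>p\<close> in \<open>(1 + t)\<^sup>-\<^sup>k\<close>.
  Constant-coefficient operators commute (Schwarz's theorem), so \<open>D (T n p) = T (n+1) p + T n (p+1)\<close>,
  and Pascal's rule \<open>c (k+1) p + c (k+1) (p-1) = c k p\<close> turns this into \<open>D (Q (k+1) m) = Q k (m+1)\<close>,
  provided \<open>B\<^sup>m\<^sup>+\<^sup>1 W = 0\<close> removes the top term \<open>T 0 (m+1)\<close>.
  Iterating \<open>k\<close> times gives \<open>D\<^sup>k (Q k \<lambda>) = Q 0 (\<lambda>+k) = A\<^sup>\<lambda>\<^sup>+\<^sup>k W = q\<close>.\<close>

section \<open>Symmetry of mixed partial derivatives\<close>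

lemma has_derivative_frechet_derivative_UNIV:
  "f differentiable_on UNIV \<Longrightarrow> (f has_derivative frechet_derivative f (at x)) (at x)"
  using frechet_derivative_works differentiable_on_def by blast

lemma mvt_along_line:
  fixes F :: "'a::real_normed_vector \<Rightarrow> real"
  assumes der: "\<And>p. (F has_derivative F' p) (at p)" and h: "h > 0"
  shows "\<exists>\<xi>. 0 < \<xi> \<and> \<xi> < h \<and> F (y + h *\<^sub>R v) - F y = h * F' (y + \<xi> *\<^sub>R v) v"
proof -
  have d: "((\<lambda>s. F (y + s *\<^sub>R v)) has_derivative (\<lambda>d. F' (y + s *\<^sub>R v) (d *\<^sub>R v)))
      (at s within {0..h})" for s
    by (rule has_derivative_compose[OF _ der]) (auto intro!: derivative_eq_intros)
  obtain \<xi> where "\<xi> \<in> {0<..<h}"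
    and "F (y + h *\<^sub>R v) - F (y + 0 *\<^sub>R v) = F' (y + \<xi> *\<^sub>R v) ((h - 0) *\<^sub>R v)"
    using mvt_simple[OF h, of "\<lambda>s. F (y + s *\<^sub>R v)", OF d] by blast
  moreover have "F' (y + \<xi> *\<^sub>R v) (h *\<^sub>R v) = h * F' (y + \<xi> *\<^sub>R v) v"
    using has_derivative_bounded_linear[OF der] by (simp add: linear_simps)
  ultimately show ?thesis by auto
qed

text \<open>Mean value theorem in direction \<open>e\<^sub>i\<close> for \<open>f (\<cdot> + h e\<^sub>j) - f\<close>, then in direction \<open>e\<^sub>j\<close> for \<open>\<partial>\<^sub>i f\<close>.\<close>

lemma second_difference_eq_mixed_partial:
  fixes f :: "real^'n::finite \<Rightarrow> real"
  assumes f: "f differentiable_on UNIV" and fi: "partial i f differentiable_on UNIV" and h: "h > 0"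
  shows "\<exists>y. dist y x < 2 * h \<and>
    f (x + h *\<^sub>R axis i 1 + h *\<^sub>R axis j 1) - f (x + h *\<^sub>R axis j 1) - f (x + h *\<^sub>R axis i 1) + f x
    = h * h * partial j (partial i f) y"
proof -
  let ?ei = "axis i 1 :: real^'n" and ?ej = "axis j 1 :: real^'n"
  have diff_derivative: "((\<lambda>p. f (p + h *\<^sub>R ?ej) - f p) has_derivative
      (\<lambda>u. frechet_derivative f (at (p + h *\<^sub>R ?ej)) u - frechet_derivative f (at p) u)) (at p)" for p
  proof (rule has_derivative_diff)
    show "((\<lambda>p. f (p + h *\<^sub>R ?ej)) has_derivative frechet_derivative f (at (p + h *\<^sub>R ?ej))) (at p)"
      using has_derivative_compose[where f="\<lambda>p. p + h *\<^sub>R ?ej" and f'="\<lambda>u. u",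
          OF _ has_derivative_frechet_derivative_UNIV[OF f]]
        has_derivative_add_const[OF has_derivative_ident] by blast
  qed (rule has_derivative_frechet_derivative_UNIV[OF f])
  obtain \<xi> where \<xi>: "0 < \<xi>" "\<xi> < h" and e1:
    "f (x + h *\<^sub>R ?ei + h *\<^sub>R ?ej) - f (x + h *\<^sub>R ?ei) - (f (x + h *\<^sub>R ?ej) - f x)
     = h * (partial i f (x + \<xi> *\<^sub>R ?ei + h *\<^sub>R ?ej) - partial i f (x + \<xi> *\<^sub>R ?ei))"
    using mvt_along_line[OF diff_derivative h, of x ?ei] unfolding partial_def by (auto simp: algebra_simps)
  obtain \<eta> where \<eta>: "0 < \<eta>" "\<eta> < h" and e2:
    "partial i f (x + \<xi> *\<^sub>R ?ei + h *\<^sub>R ?ej) - partial i f (x + \<xi> *\<^sub>R ?ei)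
     = h * partial j (partial i f) (x + \<xi> *\<^sub>R ?ei + \<eta> *\<^sub>R ?ej)"
    using mvt_along_line[OF has_derivative_frechet_derivative_UNIV[OF fi] h, of "x + \<xi> *\<^sub>R ?ei" ?ej]
    unfolding partial_def[of j] by auto
  have "dist (x + \<xi> *\<^sub>R ?ei + \<eta> *\<^sub>R ?ej) x \<le> norm (\<xi> *\<^sub>R ?ei) + norm (\<eta> *\<^sub>R ?ej)"
    by (simp add: dist_norm norm_triangle_ineq del: norm_scaleR)
  also have "\<dots> < 2 * h"
    using \<xi> \<eta> by simp
  finally show ?thesis
    using e1 e2 by (intro exI[of _ "x + \<xi> *\<^sub>R ?ei + \<eta> *\<^sub>R ?ej"]) (auto simp: algebra_simps)
qed

lemma continuous_at_values_meet_imp_eq: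
  fixes f g :: "'a::metric_space \<Rightarrow> 'b::metric_space"
  assumes "isCont f x" "isCont g x"
    and meet: "\<And>h. h > 0 \<Longrightarrow> \<exists>y z. dist y x < h \<and> dist z x < h \<and> f y = g z"
  shows "f x = g x"
proof (rule ccontr)
  assume "f x \<noteq> g x"
  define e where "e = dist (f x) (g x) / 2"
  have e: "e > 0"
    using \<open>f x \<noteq> g x\<close> by (simp add: e_def)
  obtain d1 where d1: "d1 > 0" "\<And>y. dist y x < d1 \<Longrightarrow> dist (f y) (f x) < e"
    using assms(1) e unfolding continuous_at_eps_delta by blast
  obtain d2 where d2: "d2 > 0" "\<And>z. dist z x < d2 \<Longrightarrow> dist (g z) (g x) < e"
    using assms(2) e unfolding continuous_at_eps_delta by blast
  obtain y z where "dist y x < min d1 d2" "dist z x < min d1 d2" "f y = g z"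
    using meet[of "min d1 d2"] d1 d2 by auto
  then have "dist (f x) (g x) < 2 * e"
    using d1(2)[of y] d2(2)[of z] dist_triangle3[of "f x" "g x" "f y"] by (simp add: dist_commute)
  then show False
    by (simp add: e_def)
qed

theorem partial_commute_at:
  fixes f :: "real^'n::finite \<Rightarrow> real"
  assumes "f differentiable_on UNIV"
    and "partial i f differentiable_on UNIV" and "partial j f differentiable_on UNIV"
    and "isCont (partial j (partial i f)) x" and "isCont (partial i (partial j f)) x"
  shows "partial j (partial i f) x = partial i (partial j f) x"
proof (rule continuous_at_values_meet_imp_eq[OF assms(4,5)])
  fix h :: real
  assume "h > 0"
  define r where "r = h / 2"
  have r: "r > 0" "2 * r = h"
    using \<open>h > 0\<close> by (simp_all add: r_def)
  define \<Delta> where "\<Delta> u v = f (x + u + v) - f (x + v) - f (x + u) + f x" for u v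
  obtain y where y: "dist y x < h"
    "\<Delta> (r *\<^sub>R axis i 1) (r *\<^sub>R axis j 1) = r * r * partial j (partial i f) y"
    using second_difference_eq_mixed_partial[OF assms(1,2) r(1), of x j] unfolding \<Delta>_def r(2) by blast
  obtain z where z: "dist z x < h"
    "\<Delta> (r *\<^sub>R axis j 1) (r *\<^sub>R axis i 1) = r * r * partial i (partial j f) z"
    using second_difference_eq_mixed_partial[OF assms(1,3) r(1), of x i] unfolding \<Delta>_def r(2) by blast
  have "\<Delta> u v = \<Delta> v u" for u v
    by (simp add: \<Delta>_def algebra_simps)
  then have "partial j (partial i f) y = partial i (partial j f) z"
    using y(2) z(2) r(1) by simp
  with y(1) z(1) show "\<exists>y z. dist y x < h \<and> dist z x < h \<and> partial j (partial i f) y = partial i (partial j f) z"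
    by blast
qed

section \<open>Constant-coefficient operators on smooth functions\<close>

lemma partials_append: "partials (xs @ ys) f = partials xs (partials ys f)"
  by (induction xs) auto

lemma smooth_partials: "smooth f \<Longrightarrow> smooth (partials ws f)"
  unfolding smooth_def by (metis partials_append)

lemma partial_commute:
  assumes "smooth f"
  shows "partial i (partial j f) = partial j (partial i f)"
proof (rule ext)
  fix x
  have diff: "partials ws f differentiable_on UNIV" for ws
    using assms by (simp add: smooth_def)
  have cont: "isCont (partials ws f) x" for ws x
    using diff[of ws] differentiable_imp_continuous_on continuous_on_eq_continuous_at by blast
  show "partial i (partial j f) x = partial j (partial i f) x"
    using partial_commute_at[of f j i x] diff[of "[]"] diff[of "[i]"] diff[of "[j]"]
      cont[where ws="[i, j]"] cont[where ws="[j, i]"] by simp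
qed

lemma partials_commute:
  assumes "smooth f"
  shows "partials vs (partials ws f) = partials ws (partials vs f)"
proof -
  have partial_partials: "partial i (partials ws g) = partials ws (partial i g)" if "smooth g" for i g
    using that by (induction ws) (simp_all add: partial_commute smooth_partials)
  show ?thesis
    using assms partial_partials[of "partials _ f"] by (induction vs) (simp_all add: smooth_partials)
qed

lemma has_derivative_weighted_sum:
  fixes F :: "'s \<Rightarrow> 'a::real_normed_vector \<Rightarrow> real"
  assumes "\<And>s. s \<in> S \<Longrightarrow> F s differentiable_on UNIV"
  shows "((\<lambda>x. \<Sum>s\<in>S. u s * F s x) has_derivative
           (\<lambda>v. \<Sum>s\<in>S. u s * frechet_derivative (F s) (at x) v)) (at x)"
proof (rule has_derivative_sum)
  fix s
  assume "s \<in> S"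
  show "((\<lambda>x. u s * F s x) has_derivative (\<lambda>v. u s * frechet_derivative (F s) (at x) v)) (at x)"
    using has_derivative_frechet_derivative_UNIV[OF assms[OF \<open>s \<in> S\<close>]] by (rule has_derivative_mult_right)
qed

lemma partial_weighted_sum:
  assumes "\<And>s. s \<in> S \<Longrightarrow> F s differentiable_on UNIV"
  shows "partial i (\<lambda>x. \<Sum>s\<in>S. u s * F s x) = (\<lambda>x. \<Sum>s\<in>S. u s * partial i (F s) x)"
proof (rule ext)
  fix x
  have "frechet_derivative (\<lambda>x. \<Sum>s\<in>S. u s * F s x) (at x)
      = (\<lambda>v. \<Sum>s\<in>S. u s * frechet_derivative (F s) (at x) v)"
    using frechet_derivative_at[OF has_derivative_weighted_sum[OF assms]] by (rule sym)
  then show "partial i (\<lambda>x. \<Sum>s\<in>S. u s * F s x) x = (\<Sum>s\<in>S. u s * partial i (F s) x)"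
    by (simp add: partial_def)
qed

lemma partials_weighted_sum:
  assumes "\<And>s. s \<in> S \<Longrightarrow> smooth (F s)"
  shows "partials ws (\<lambda>x. \<Sum>s\<in>S. u s * F s x) = (\<lambda>x. \<Sum>s\<in>S. u s * partials ws (F s) x)"
proof (induction ws)
  case (Cons i ws)
  have "partials ws (F s) differentiable_on UNIV" if "s \<in> S" for s
    using assms[OF that] by (simp add: smooth_def)
  with Cons.IH show ?case
    by (simp add: partial_weighted_sum)
qed simp

lemma smooth_weighted_sum:
  assumes "\<And>s. s \<in> S \<Longrightarrow> smooth (F s)"
  shows "smooth (\<lambda>x. \<Sum>s\<in>S. u s * F s x)"
  unfolding smooth_def
proof
  fix ws
  have "partials ws (F s) differentiable_on UNIV" if "s \<in> S" for s
    using assms[OF that] by (simp add: smooth_def)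
  then have "((\<lambda>x. \<Sum>s\<in>S. u s * partials ws (F s) x) has_derivative
      (\<lambda>v. \<Sum>s\<in>S. u s * frechet_derivative (partials ws (F s)) (at x) v)) (at x)" for x
    by (rule has_derivative_weighted_sum)
  then have "(\<lambda>x. \<Sum>s\<in>S. u s * partials ws (F s) x) differentiable_on UNIV"
    unfolding differentiable_on_def differentiable_def by blast
  then show "partials ws (\<lambda>x. \<Sum>s\<in>S. u s * F s x) differentiable_on UNIV"
    by (simp add: partials_weighted_sum[OF assms])
qed

lemma smooth_diffop: "smooth f \<Longrightarrow> smooth (diffop c f)"
  unfolding diffop_def by (intro smooth_weighted_sum smooth_partials)

lemma diffop_weighted_sum:
  assumes "\<And>s. s \<in> S \<Longrightarrow> smooth (F s)"
  shows "diffop c (\<lambda>x. \<Sum>s\<in>S. u s * F s x) = (\<lambda>x. \<Sum>s\<in>S. u s * diffop c (F s) x)"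
  by (simp add: diffop_def partials_weighted_sum[OF assms] sum_distrib_left sum.swap[of _ S] algebra_simps)

lemma partials_zero: "partials ws (\<lambda>x. 0) = (\<lambda>x. 0)"
  by (induction ws) (simp_all add: partial_def)

lemma diffop_zero: "diffop c (\<lambda>x. 0) = (\<lambda>x. 0)"
  by (simp add: diffop_def partials_zero)

lemma diffop_commute:
  assumes "smooth f"
  shows "diffop a (diffop b f) = diffop b (diffop a f)"
proof -
  have "diffop a (diffop b f) = (\<lambda>x. \<Sum>is | a is \<noteq> 0. \<Sum>js | b js \<noteq> 0.
          a is * b js * partials is (partials js f) x)" for a b
    unfolding diffop_def[of b] diffop_weighted_sum[OF smooth_partials[OF assms]]
    by (simp add: diffop_def sum_distrib_left sum.swap[of _ "{js. b js \<noteq> 0}"] algebra_simps)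
  then show ?thesis
    by (simp add: partials_commute[OF assms] sum.swap[of _ "{is. a is \<noteq> 0}"] mult.commute)
qed

lemma diffop_add_coeffs:
  assumes "const_coeff_op a" "const_coeff_op b"
  shows "diffop (\<lambda>is. a is + b is) f = (\<lambda>x. diffop a f x + diffop b f x)"
proof
  fix x
  let ?U = "{is. a is \<noteq> 0} \<union> {is. b is \<noteq> 0}"
  have extend: "(\<Sum>is | c is \<noteq> 0. c is * partials is f x) = (\<Sum>is\<in>?U. c is * partials is f x)"
    if "{is. c is \<noteq> 0} \<subseteq> ?U" for c
    using assms that by (intro sum.mono_neutral_left) (auto simp: const_coeff_op_def)
  show "diffop (\<lambda>is. a is + b is) f x = diffop a f x + diffop b f x"
    unfolding diffop_def by (subst (1 2 3) extend) (auto simp: sum.distrib algebra_simps)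
qed

section \<open>Inverting a sum of two commuting operators\<close>

definition neg_binomial_coeff :: "nat \<Rightarrow> nat \<Rightarrow> real" where
  "neg_binomial_coeff k p = (-1) ^ p * real ((k + p - 1) choose p)"

lemma neg_binomial_coeff_0_left: "neg_binomial_coeff 0 p = (if p = 0 then 1 else 0)"
  by (simp add: neg_binomial_coeff_def)

lemma neg_binomial_coeff_pascal:
  "neg_binomial_coeff (Suc k) (Suc p) + neg_binomial_coeff (Suc k) p = neg_binomial_coeff k (Suc p)"
  by (simp add: neg_binomial_coeff_def algebra_simps)

lemma neg_binomial_coeff_Suc_0: "neg_binomial_coeff (Suc k) 0 = neg_binomial_coeff k 0"
  by (simp add: neg_binomial_coeff_def)

lemma neg_binomial_sum_pascal:
  fixes g :: "nat \<Rightarrow> real"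
  assumes "g (Suc m) = 0"
  shows "(\<Sum>p = 0..m. neg_binomial_coeff (Suc k) p * (g p + g (Suc p)))
       = (\<Sum>p = 0..Suc m. neg_binomial_coeff k p * g p)"
proof -
  let ?c = "neg_binomial_coeff"
  have "(\<Sum>p = 0..Suc m. ?c k p * g p) = ?c k 0 * g 0 + (\<Sum>p = 0..m. ?c k (Suc p) * g (Suc p))"
    unfolding sum.atLeast0_atMost_Suc_shift by simp
  also have "\<dots> = (?c (Suc k) 0 * g 0 + (\<Sum>p = 0..m. ?c (Suc k) (Suc p) * g (Suc p)))
      + (\<Sum>p = 0..m. ?c (Suc k) p * g (Suc p))"
    by (simp add: neg_binomial_coeff_Suc_0 neg_binomial_coeff_pascal[of k, symmetric] distrib_right sum.distrib)
  also have "?c (Suc k) 0 * g 0 + (\<Sum>p = 0..m. ?c (Suc k) (Suc p) * g (Suc p))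
      = (\<Sum>p = 0..Suc m. ?c (Suc k) p * g p)"
    unfolding sum.atLeast0_atMost_Suc_shift by simp
  also have "\<dots> = (\<Sum>p = 0..m. ?c (Suc k) p * g p)"
    using assms by simp
  finally show ?thesis
    by (simp add: distrib_left sum.distrib)
qed

locale commuting_splitting =
  fixes S :: "('a \<Rightarrow> real) set" and A B D :: "('a \<Rightarrow> real) \<Rightarrow> 'a \<Rightarrow> real"
  assumes A_closed: "f \<in> S \<Longrightarrow> A f \<in> S"
    and B_closed: "f \<in> S \<Longrightarrow> B f \<in> S"
    and commute: "f \<in> S \<Longrightarrow> A (B f) = B (A f)"
    and D_split: "f \<in> S \<Longrightarrow> D f = (\<lambda>x. A f x + B f x)"
    and D_weighted_sum: "(\<And>s. s \<in> P \<Longrightarrow> F s \<in> S) \<Longrightarrow> finite (P :: nat set) \<Longrightarrow>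
      D (\<lambda>x. \<Sum>s\<in>P. u s * F s x) = (\<lambda>x. \<Sum>s\<in>P. u s * D (F s) x)"
    and B_zero: "B (\<lambda>x. 0) = (\<lambda>x. 0)"
begin

lemma funpow_closed:
  assumes "f \<in> S"
  shows "(A ^^ n) ((B ^^ p) f) \<in> S"
proof -
  have "(B ^^ p) f \<in> S"
    using assms by (induction p) (simp_all add: B_closed)
  then show ?thesis
    by (induction n) (simp_all add: A_closed)
qed

lemma B_funpow_A:
  assumes "f \<in> S"
  shows "B ((A ^^ n) f) = (A ^^ n) (B f)"
proof (induction n)
  case (Suc n)
  have "(A ^^ n) f \<in> S"
    using funpow_closed[OF assms, of n 0] by simp
  with Suc.IH show ?case
    by (simp add: commute[symmetric])
qed simp

lemma D_funpow_A_B: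
  assumes "f \<in> S"
  shows "D ((A ^^ n) ((B ^^ p) f)) = (\<lambda>x. (A ^^ Suc n) ((B ^^ p) f) x + (A ^^ n) ((B ^^ Suc p) f) x)"
  using D_split[OF funpow_closed[OF assms]] B_funpow_A[OF funpow_closed[OF assms, of 0]] by simp

lemma D_neg_binomial_sum:
  assumes "f \<in> S" "(B ^^ Suc m) f = (\<lambda>x. 0)"
  shows "D (\<lambda>x. \<Sum>p = 0..m. neg_binomial_coeff (Suc k) p * (A ^^ (m - p)) ((B ^^ p) f) x)
       = (\<lambda>x. \<Sum>p = 0..Suc m. neg_binomial_coeff k p * (A ^^ (Suc m - p)) ((B ^^ p) f) x)"
    (is "D ?Q = ?R")
proof (rule ext)
  fix x
  define g where "g p = (A ^^ (Suc m - p)) ((B ^^ p) f) x" for p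
  have "D ?Q x = (\<Sum>p = 0..m. neg_binomial_coeff (Suc k) p * (g p + g (Suc p)))"
    using assms(1) by (simp add: D_weighted_sum funpow_closed D_funpow_A_B g_def Suc_diff_le)
  also have "\<dots> = (\<Sum>p = 0..Suc m. neg_binomial_coeff k p * g p)"
    using assms(2) by (intro neg_binomial_sum_pascal) (simp add: g_def)
  finally show "D ?Q x = ?R x"
    by (simp add: g_def)
qed

theorem funpow_D_neg_binomial_sum:
  assumes "f \<in> S" "(B ^^ Suc m) f = (\<lambda>x. 0)"
  shows "(D ^^ k) (\<lambda>x. \<Sum>p = 0..m. neg_binomial_coeff k p * (A ^^ (m - p)) ((B ^^ p) f) x)
       = (A ^^ (m + k)) f"
  using assms(2)
proof (induction k arbitrary: m)
  case 0
  then show ?case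
    by (simp add: neg_binomial_coeff_0_left if_distrib[of "\<lambda>c. c * _"] sum.delta cong: if_cong)
next
  case (Suc k)
  have "(B ^^ Suc (Suc m)) f = (\<lambda>x. 0)"
    using Suc.prems by (simp add: B_zero)
  then show ?case
    using Suc.IH[of "Suc m"] D_neg_binomial_sum[OF assms(1) Suc.prems]
    by (simp only: funpow_Suc_right o_apply) simp
qed

end

theorem theorem4p1:
  fixes q W :: "real^'n::finite \<Rightarrow> real"
    and a b d :: "'n list \<Rightarrow> real"
    and lam k :: nat
  assumes "C1 q"
    and "const_coeff_op a" and "const_coeff_op b" and "const_coeff_op d"
    and "d = (\<lambda>is. a is + b is)"
    and "smooth W"
    and "(diffop a ^^ (lam + k)) W = q"
    and "(diffop b ^^ (lam + 1)) W = (\<lambda>x. 0)"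
  shows "(diffop d ^^ k)
           (\<lambda>x. \<Sum>p = 0..lam. (-1) ^ p * real ((k + p - 1) choose p)
                  * ((diffop a ^^ (lam - p)) ((diffop b ^^ p) W)) x) = q"
proof -
  interpret commuting_splitting "{f. smooth f}" "diffop a" "diffop b" "diffop d"
    using assms(2,3,5)
    by unfold_locales (simp_all add: smooth_diffop diffop_commute diffop_add_coeffs diffop_weighted_sum
        diffop_zero sum.distrib distrib_left)
  show ?thesis
    using funpow_D_neg_binomial_sum[of W lam k] assms(6-8) by (simp add: neg_binomial_coeff_def)
qed

end
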